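(* Let $\mathbb{K}$ be a field and $G$ a connected finite simple graph. Then $\mathcal{A}_G(\mathbb{K})$ is combinatorially formal: it is formal, and every arrangement whose intersection lattice is isomorphic to $L(\mathcal{A}_G(\mathbb{K}))$ is formal.
   Context: For a finite simple graph $G$ on $[n]$ and a field $\mathbb{K}$, $H_I:=\ker(\sum_{i\in I}x_i)\subseteq\mathbb{K}^n$ and $\mathcal{A}_G(\mathbb{K}):=\{H_I\mid \varnothing\neq I\subseteq[n],\ G[I]\text{ connected}\}$. An arrangement $\mathcal{A}$ with defining linear forms $\alpha_H$ ($H\in\mathcal{A}$) is formal if the space of linear relations $\{(c_H)\in\mathbb{K}^{\mathcal{A}}\mid\sum_H c_H\alpha_H=0\}$ is spanned by relations supported on sets $\mathcal{A}_X=\{H\in\mathcal{A}\mid X\subseteq H\}$ with $X$ an intersection of codimension $2$. $L(\mathcal{A})$ is the intersection lattice ordered by reverse inclusion. *)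

theory Defs
  imports "HOL-Analysis.Analysis"
begin

text \<open>Simple graphs on the finite vertex type 'n (playing the role of [n]).\<close>

definition simple_graph :: "('n \<Rightarrow> 'n \<Rightarrow> bool) \<Rightarrow> bool" where
  "simple_graph E \<longleftrightarrow> (\<forall>u v. E u v \<longrightarrow> E v u) \<and> (\<forall>u. \<not> E u u)"

definition induced_connected :: "('n \<Rightarrow> 'n \<Rightarrow> bool) \<Rightarrow> 'n set \<Rightarrow> bool" where
  "induced_connected E I \<longleftrightarrow> I \<noteq> {} \<and>
     (\<forall>u\<in>I. \<forall>v\<in>I. (u, v) \<in> {(x, y). x \<in> I \<and> y \<in> I \<and> E x y}\<^sup>*)"

definition graph_connected :: "('n \<Rightarrow> 'n \<Rightarrow> bool) \<Rightarrow> bool" where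
  "graph_connected E \<longleftrightarrow> induced_connected E UNIV"

definition lform :: "'a::field ^ 'm \<Rightarrow> 'a ^ 'm \<Rightarrow> 'a" where
  "lform a x = (\<Sum>i\<in>UNIV. a $ i * x $ i)"

definition kernel_form :: "'a::field ^ 'm \<Rightarrow> ('a ^ 'm) set" where
  "kernel_form a = {x. lform a x = 0}"

definition arrangement :: "('a::field ^ 'm) set set \<Rightarrow> bool" where
  "arrangement A \<longleftrightarrow> finite A \<and> (\<forall>H\<in>A. \<exists>a. a \<noteq> 0 \<and> H = kernel_form a)"

definition H_I :: "'n set \<Rightarrow> ('a::field ^ 'n::finite) set" where
  "H_I I = {x. (\<Sum>i\<in>I. x $ i) = 0}"

definition graphic_arr :: "('n::finite \<Rightarrow> 'n \<Rightarrow> bool) \<Rightarrow> ('a::field ^ 'n) set set" where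
  "graphic_arr E = {H_I I | I. I \<noteq> {} \<and> induced_connected E I}"

text \<open>Intersection lattice L(A) (the empty intersection is the whole space).\<close>
definition int_lattice :: "('a ^ 'm) set set \<Rightarrow> ('a ^ 'm) set set" where
  "int_lattice A = (\<lambda>B. \<Inter>B) ` Pow A"

definition codim :: "('a::field ^ 'm) set \<Rightarrow> nat" where
  "codim X = CARD('m) - vec.dim X"

definition localization :: "('a ^ 'm) set set \<Rightarrow> ('a ^ 'm) set \<Rightarrow> ('a ^ 'm) set set" where
  "localization A X = {H \<in> A. X \<subseteq> H}"

text \<open>(c_H) is a linear relation among the defining forms alpha_H, H in A
  (c is a vector in K^A, extended by 0 outside A).\<close>
definition is_relation ::
  "('a::field ^ 'm) set set \<Rightarrow> (('a ^ 'm) set \<Rightarrow> 'a ^ 'm) \<Rightarrow> (('a ^ 'm) set \<Rightarrow> 'a) \<Rightarrow> bool" where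
  "is_relation A \<alpha> c \<longleftrightarrow> (\<forall>H. H \<notin> A \<longrightarrow> c H = 0) \<and> (\<Sum>H\<in>A. c H *s \<alpha> H) = 0"

text \<open>Formality: for defining forms alpha_H of the hyperplanes, every relation lies in the
  span of the relations supported on some A_X with X an intersection of codimension 2.
  Since each such space of local relations is a subspace, their span is the set of finite
  sums of local relations.\<close>
definition formal :: "('a::field ^ 'm) set set \<Rightarrow> bool" where
  "formal A \<longleftrightarrow>
    (\<forall>\<alpha>. (\<forall>H\<in>A. \<alpha> H \<noteq> 0 \<and> H = kernel_form (\<alpha> H)) \<longrightarrow>
      (\<forall>c. is_relation A \<alpha> c \<longrightarrow>
        (\<exists>S d. finite S \<and> S \<subseteq> {X \<in> int_lattice A. codim X = 2} \<and>
           (\<forall>X\<in>S. is_relation A \<alpha> (d X) \<and>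
                   (\<forall>H. d X H \<noteq> 0 \<longrightarrow> H \<in> localization A X)) \<and>
           (\<forall>H. c H = (\<Sum>X\<in>S. d X H)))))"

definition lattice_iso :: "('a ^ 'm) set set \<Rightarrow> ('b ^ 'k) set set \<Rightarrow> bool" where
  "lattice_iso A B \<longleftrightarrow> (\<exists>f. bij_betw f (int_lattice A) (int_lattice B) \<and>
     (\<forall>X\<in>int_lattice A. \<forall>Y\<in>int_lattice A. X \<subseteq> Y \<longleftrightarrow> f X \<subseteq> f Y))"

end

theory Submission
  imports Defs
begin

(* If |I| >= 2, a connected vertex set I splits into disjoint connected parts J and K,
   and then H_J \<inter> H_K \<subseteq> H_I.  The forms of three hyperplanes through a common
   codimension-2 flat are linearly dependent, so alpha_I - s alpha_J - t alpha_K is a local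
   relation.  By induction on |I| every defining form is congruent, modulo sums of local
   relations, to a combination of the forms of the coordinate hyperplanes H_{v}; these admit
   no nontrivial relation, because the intersection of all but one of them is not contained
   in the remaining one.  Hence every relation is a sum of local ones.
   Both ingredients, the splittings (with a rank that decreases) and the independence of the
   coordinate hyperplanes, are statements about inclusions and meets of hyperplanes only, so
   a lattice isomorphism transports them to any arrangement with the same lattice, which is
   therefore formal by the same argument. *)

section \<open>Linear forms and their kernels\<close>

lemma lform_add_right: "lform a (x + y) = lform a x + lform a y"
  by (simp add: lform_def sum.distrib distrib_left)

lemma lform_diff_right: "lform a (x - y) = lform a x - lform a y"
  by (simp add: lform_def sum_subtractf right_diff_distrib)

lemma lform_scale_right: "lform a (c *s x) = c * lform a x"
  by (simp add: lform_def sum_distrib_left mult.left_commute)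

lemma lform_add_left: "lform (a + b) x = lform a x + lform b x"
  by (simp add: lform_def sum.distrib distrib_right)

lemma lform_scale_left: "lform (c *s a) x = c * lform a x"
  by (simp add: lform_def sum_distrib_left mult.assoc)

lemma lform_zero_left [simp]: "lform 0 x = 0"
  by (simp add: lform_def)

lemma lform_sum_left:
  "finite F \<Longrightarrow> lform (\<Sum>H\<in>F. c H *s a H) x = (\<Sum>H\<in>F. c H * lform (a H) x)"
  by (induction F rule: finite_induct) (simp_all add: lform_add_left lform_scale_left)

lemma lform_axis: "lform a (axis i 1) = a $ i"
  by (simp add: lform_def axis_def if_distrib cong: if_cong)

lemma lform_eqI: "(\<And>x. lform a x = lform b x) \<Longrightarrow> a = b"
  by (metis lform_axis vec_eq_iff)

lemma ex_lform_nonzero: "a \<noteq> 0 \<Longrightarrow> \<exists>x. lform a x \<noteq> 0"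
  using lform_eqI[of a 0] by auto

lemma subspace_kernel_form: "vec.subspace (kernel_form a)"
  unfolding vec.subspace_def kernel_form_def
  by (simp add: lform_add_right lform_scale_right) (simp add: lform_def)

lemma kernel_form_neq_UNIV: "a \<noteq> 0 \<Longrightarrow> kernel_form a \<noteq> UNIV"
  using ex_lform_nonzero by (auto simp: kernel_form_def)

lemma kernel_form_subset_imp_eq:
  fixes a b :: "'a::field ^ 'm"
  assumes "b \<noteq> 0" and "kernel_form a \<subseteq> kernel_form b"
  shows "kernel_form a = kernel_form b"
proof (rule ccontr)
  assume "kernel_form a \<noteq> kernel_form b"
  then obtain x where x: "lform b x = 0" "lform a x \<noteq> 0"
    using assms(2) by (auto simp: kernel_form_def)
  have "lform b y = 0" for y
  proof -
    have "y - (lform a y / lform a x) *s x \<in> kernel_form a"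
      using x by (simp add: kernel_form_def lform_diff_right lform_scale_right)
    then have "lform b (y - (lform a y / lform a x) *s x) = 0"
      using assms(2) by (auto simp: kernel_form_def)
    then show ?thesis using x(1) by (simp add: lform_diff_right lform_scale_right)
  qed
  then show False using assms(1) ex_lform_nonzero by blast
qed

lemma ex_kernel_form_not_subset:
  fixes a b :: "'a::field ^ 'm"
  assumes "b \<noteq> 0" and "kernel_form a \<noteq> kernel_form b"
  shows "\<exists>z. lform a z = 0 \<and> lform b z \<noteq> 0"
  using kernel_form_subset_imp_eq[OF assms(1)] assms(2) by (auto simp: kernel_form_def)

lemma kernel_form_Int_subset_imp_combination:
  fixes a b c :: "'a::field ^ 'm"
  assumes "a \<noteq> 0" "b \<noteq> 0" "kernel_form a \<noteq> kernel_form b"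
    and "kernel_form a \<inter> kernel_form b \<subseteq> kernel_form c"
  shows "\<exists>s t. c = s *s a + t *s b"
proof -
  obtain z where z: "lform a z = 0" "lform b z \<noteq> 0"
    using ex_kernel_form_not_subset[OF assms(2,3)] by blast
  obtain x where x: "lform b x = 0" "lform a x \<noteq> 0"
    using ex_kernel_form_not_subset[OF assms(1)] assms(3) by metis
  have "c = (lform c x / lform a x) *s a + (lform c z / lform b z) *s b"
  proof (rule lform_eqI)
    fix y
    let ?y = "y - (lform a y / lform a x) *s x - (lform b y / lform b z) *s z"
    have "?y \<in> kernel_form a \<inter> kernel_form b"
      using x z by (simp add: kernel_form_def lform_diff_right lform_scale_right)
    then have "lform c ?y = 0" using assms(4) by (auto simp: kernel_form_def)
    then have "lform c y - lform a y * lform c x / lform a x = lform b y * lform c z / lform b z"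
      by (simp add: lform_diff_right lform_scale_right)
    then have "lform c y = lform a y * lform c x / lform a x + lform b y * lform c z / lform b z"
      by (metis diff_eq_eq add.commute)
    then show "lform c y = lform ((lform c x / lform a x) *s a + (lform c z / lform b z) *s b) y"
      by (simp add: lform_add_left lform_scale_left mult.commute)
  qed
  then show ?thesis by blast
qed

lemma dim_Int_kernel_form:
  fixes S :: "('a::field ^ 'm) set"
  assumes S: "vec.subspace S" and "z \<in> S" and z: "lform a z \<noteq> 0"
  shows "vec.dim S = vec.dim (S \<inter> kernel_form a) + 1"
proof -
  let ?T = "S \<inter> kernel_form a"
  have T: "vec.subspace ?T"
    using S subspace_kernel_form vec.subspace_inter by blast
  have "vec.span (insert z ?T) = S"
  proof (rule vec.span_subspace)
    show "insert z ?T \<subseteq> S" using \<open>z \<in> S\<close> by blast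
    show "S \<subseteq> vec.span (insert z ?T)"
    proof
      fix y assume "y \<in> S"
      then have "y - (lform a y / lform a z) *s z \<in> ?T"
        using \<open>z \<in> S\<close> S z
        by (simp add: kernel_form_def lform_diff_right lform_scale_right
            vec.subspace_diff vec.subspace_scale)
      then show "y \<in> vec.span (insert z ?T)"
        unfolding vec.span_insert vec.span_eq_iff[THEN iffD2, OF T] by blast
    qed
  qed (fact S)
  moreover have "z \<notin> vec.span ?T"
    using z T by (subst vec.span_eq_iff[THEN iffD2]) (auto simp: kernel_form_def)
  ultimately show ?thesis
    using vec.dim_insert[of z ?T] by (metis vec.dim_span)
qed

lemma codim_kernel_form_Int:
  fixes a b :: "'a::field ^ 'm"
  assumes "a \<noteq> 0" "b \<noteq> 0" "kernel_form a \<noteq> kernel_form b"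
  shows "codim (kernel_form a \<inter> kernel_form b) = 2"
proof -
  obtain z where z: "lform a z = 0" "lform b z \<noteq> 0"
    using ex_kernel_form_not_subset[OF assms(2,3)] by blast
  obtain x where x: "lform a x \<noteq> 0" using ex_lform_nonzero[OF assms(1)] by blast
  have "vec.dim (UNIV :: ('a ^ 'm) set) = vec.dim (kernel_form a) + 1"
    using dim_Int_kernel_form[OF vec.subspace_UNIV _ x] by simp
  moreover have "vec.dim (kernel_form a) = vec.dim (kernel_form a \<inter> kernel_form b) + 1"
    using dim_Int_kernel_form[OF subspace_kernel_form _ z(2)] z(1) by (simp add: kernel_form_def)
  ultimately show ?thesis
    using vec_dim_card[where 'a='a and 'n='m] by (simp add: codim_def)
qed

section \<open>Sums of local relations\<close>

lemma is_relation_add: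
  "is_relation A \<alpha> c \<Longrightarrow> is_relation A \<alpha> c' \<Longrightarrow> is_relation A \<alpha> (\<lambda>H. c H + c' H)"
  by (simp add: is_relation_def vec.scale_left_distrib sum.distrib)

lemma is_relation_diff:
  "is_relation A \<alpha> c \<Longrightarrow> is_relation A \<alpha> c' \<Longrightarrow> is_relation A \<alpha> (\<lambda>H. c H - c' H)"
  by (simp add: is_relation_def vec.scale_left_diff_distrib sum_subtractf)

lemma is_relation_scale:
  assumes "is_relation A \<alpha> c"
  shows "is_relation A \<alpha> (\<lambda>H. s * c H)"
proof -
  have "(\<Sum>H\<in>A. (s * c H) *s \<alpha> H) = s *s (\<Sum>H\<in>A. c H *s \<alpha> H)"
    by (simp add: vec.scale_sum_right)
  then show ?thesis using assms unfolding is_relation_def by simp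
qed

definition local_relation ::
  "('a::field ^ 'm) set set \<Rightarrow> (('a ^ 'm) set \<Rightarrow> 'a ^ 'm) \<Rightarrow> ('a ^ 'm) set \<Rightarrow>
    (('a ^ 'm) set \<Rightarrow> 'a) \<Rightarrow> bool"
  where "local_relation A \<alpha> X c \<longleftrightarrow>
    is_relation A \<alpha> c \<and> (\<forall>H. c H \<noteq> 0 \<longrightarrow> H \<in> localization A X)"

lemma local_relation_zero: "local_relation A \<alpha> X (\<lambda>H. 0)"
  by (simp add: local_relation_def is_relation_def)

lemma local_relation_add:
  "local_relation A \<alpha> X c \<Longrightarrow> local_relation A \<alpha> X c' \<Longrightarrow> local_relation A \<alpha> X (\<lambda>H. c H + c' H)"
  unfolding local_relation_def using is_relation_add by (metis add.right_neutral add_0)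

lemma local_relation_scale:
  "local_relation A \<alpha> X c \<Longrightarrow> local_relation A \<alpha> X (\<lambda>H. s * c H)"
  unfolding local_relation_def using is_relation_scale by (metis mult_zero_right)

definition codim2_flats :: "('a::field ^ 'm) set set \<Rightarrow> ('a ^ 'm) set set" where
  "codim2_flats A = {X \<in> int_lattice A. codim X = 2}"

(* Summing over all codimension-2 flats at once, rather than over a chosen finite set of them
   as in formal, makes closure under sums immediate. *)
definition locally_generated ::
  "('a::field ^ 'm) set set \<Rightarrow> (('a ^ 'm) set \<Rightarrow> 'a ^ 'm) \<Rightarrow> (('a ^ 'm) set \<Rightarrow> 'a) \<Rightarrow> bool"
  where "locally_generated A \<alpha> c \<longleftrightarrow>
    (\<exists>d. (\<forall>X\<in>codim2_flats A. local_relation A \<alpha> X (d X)) \<and> c = (\<lambda>H. \<Sum>X\<in>codim2_flats A. d X H))"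

lemma finite_codim2_flats: "finite A \<Longrightarrow> finite (codim2_flats A)"
  by (simp add: codim2_flats_def int_lattice_def)

lemma formalI:
  assumes "finite A"
    and "\<And>\<alpha> c. \<forall>H\<in>A. \<alpha> H \<noteq> 0 \<and> H = kernel_form (\<alpha> H) \<Longrightarrow> is_relation A \<alpha> c \<Longrightarrow>
      locally_generated A \<alpha> c"
  shows "formal A"
  unfolding formal_def
proof (intro allI impI)
  fix \<alpha> c
  assume "\<forall>H\<in>A. \<alpha> H \<noteq> 0 \<and> H = kernel_form (\<alpha> H)" and "is_relation A \<alpha> c"
  then obtain d where "\<forall>X\<in>codim2_flats A. local_relation A \<alpha> X (d X)"
    and "c = (\<lambda>H. \<Sum>X\<in>codim2_flats A. d X H)"
    using assms(2) unfolding locally_generated_def by blast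
  then show "\<exists>S d. finite S \<and> S \<subseteq> {X \<in> int_lattice A. codim X = 2} \<and>
      (\<forall>X\<in>S. is_relation A \<alpha> (d X) \<and> (\<forall>H. d X H \<noteq> 0 \<longrightarrow> H \<in> localization A X)) \<and>
      (\<forall>H. c H = (\<Sum>X\<in>S. d X H))"
    using finite_codim2_flats[OF assms(1)]
    by (intro exI[of _ "codim2_flats A"] exI[of _ d]) (auto simp: local_relation_def codim2_flats_def)
qed

lemma locally_generated_local:
  assumes "finite A" and "X \<in> codim2_flats A" and "local_relation A \<alpha> X c"
  shows "locally_generated A \<alpha> c"
  unfolding locally_generated_def
proof (intro exI conjI)
  let ?d = "\<lambda>Y H. if Y = X then c H else 0"
  have "local_relation A \<alpha> Y (?d Y)" for Y
    using assms(3) local_relation_zero by (cases "Y = X") simp_all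
  then show "\<forall>Y\<in>codim2_flats A. local_relation A \<alpha> Y (?d Y)" by blast
  show "c = (\<lambda>H. \<Sum>Y\<in>codim2_flats A. ?d Y H)"
    using assms(2) finite_codim2_flats[OF assms(1)] by (simp add: sum.delta)
qed

lemma locally_generated_zero: "locally_generated A \<alpha> (\<lambda>H. 0)"
  unfolding locally_generated_def
  by (intro exI[of _ "\<lambda>X H. 0"]) (simp add: local_relation_zero)

lemma locally_generated_add:
  assumes "locally_generated A \<alpha> c" and "locally_generated A \<alpha> c'"
  shows "locally_generated A \<alpha> (\<lambda>H. c H + c' H)"
proof -
  obtain d d' where "\<forall>X\<in>codim2_flats A. local_relation A \<alpha> X (d X) \<and> local_relation A \<alpha> X (d' X)"
    and "c = (\<lambda>H. \<Sum>X\<in>codim2_flats A. d X H)" "c' = (\<lambda>H. \<Sum>X\<in>codim2_flats A. d' X H)"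
    using assms unfolding locally_generated_def by metis
  then show ?thesis
    unfolding locally_generated_def
    by (intro exI[of _ "\<lambda>X H. d X H + d' X H"])
      (simp add: local_relation_add sum.distrib)
qed

lemma locally_generated_scale:
  assumes "locally_generated A \<alpha> c"
  shows "locally_generated A \<alpha> (\<lambda>H. s * c H)"
proof -
  obtain d where "\<forall>X\<in>codim2_flats A. local_relation A \<alpha> X (d X)"
    and "c = (\<lambda>H. \<Sum>X\<in>codim2_flats A. d X H)"
    using assms unfolding locally_generated_def by blast
  then show ?thesis
    unfolding locally_generated_def
    by (intro exI[of _ "\<lambda>X H. s * d X H"])
      (simp add: local_relation_scale sum_distrib_left)
qed

lemma locally_generated_sum:
  "finite F \<Longrightarrow> (\<And>i. i \<in> F \<Longrightarrow> locally_generated A \<alpha> (c i)) \<Longrightarrow>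
    locally_generated A \<alpha> (\<lambda>H. \<Sum>i\<in>F. c i H)"
  by (induction F rule: finite_induct) (simp_all add: locally_generated_zero locally_generated_add)

lemma locally_generated_imp_is_relation:
  assumes "finite A" and "locally_generated A \<alpha> c"
  shows "is_relation A \<alpha> c"
proof -
  obtain d where d: "\<forall>X\<in>codim2_flats A. is_relation A \<alpha> (d X)"
    and c: "c = (\<lambda>H. \<Sum>X\<in>codim2_flats A. d X H)"
    using assms(2) unfolding locally_generated_def local_relation_def by blast
  have "(\<Sum>H\<in>A. c H *s \<alpha> H) = (\<Sum>X\<in>codim2_flats A. \<Sum>H\<in>A. d X H *s \<alpha> H)"
    unfolding c by (simp add: vec.scale_sum_left sum.swap[of _ A])
  also have "\<dots> = 0" using d by (simp add: is_relation_def)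
  finally show ?thesis using d unfolding c is_relation_def by simp
qed

section \<open>Intersection lattices\<close>

lemma Inter_in_int_lattice: "S \<subseteq> A \<Longrightarrow> \<Inter>S \<in> int_lattice A"
  unfolding int_lattice_def by blast

lemma hyperplane_in_int_lattice: "H \<in> A \<Longrightarrow> H \<in> int_lattice A"
  using Inter_in_int_lattice[of "{H}" A] by simp

lemma UNIV_in_int_lattice: "UNIV \<in> int_lattice A"
  using Inter_in_int_lattice[of "{}" A] by simp

lemma int_lattice_Inter_closed:
  assumes "T \<subseteq> int_lattice A"
  shows "\<Inter>T \<in> int_lattice A"
proof -
  have "\<forall>X\<in>T. \<exists>P. P \<subseteq> A \<and> X = \<Inter>P"
    using assms unfolding int_lattice_def by blast
  then obtain P where P: "\<forall>X\<in>T. P X \<subseteq> A \<and> \<Inter>(P X) = X"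
    by (metis (mono_tags))
  have "\<Inter>(\<Union>X\<in>T. P X) = (\<Inter>X\<in>T. \<Inter>(P X))" by blast
  also have "\<dots> = \<Inter>T" using P by simp
  finally have "\<Inter>T = \<Inter>(\<Union>X\<in>T. P X)" by simp
  moreover have "(\<Union>X\<in>T. P X) \<subseteq> A" using P by blast
  ultimately show ?thesis using Inter_in_int_lattice by metis
qed

lemma int_lattice_subset_hyperplane:
  assumes "X \<in> int_lattice A" and "X \<noteq> UNIV"
  shows "\<exists>H\<in>A. X \<subseteq> H"
proof -
  obtain P where P: "P \<subseteq> A" "X = \<Inter>P" using assms(1) unfolding int_lattice_def by blast
  then obtain H where "H \<in> P" using assms(2) by blast
  then show ?thesis using P by blast
qed

lemma arrangement_hyperplane_neq_UNIV:
  assumes "arrangement A" and "H \<in> A"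
  shows "H \<noteq> UNIV"
proof -
  obtain a where "a \<noteq> 0" "H = kernel_form a" using assms unfolding arrangement_def by blast
  then show ?thesis using kernel_form_neq_UNIV by simp
qed

lemma arrangement_hyperplane_subset_eq:
  assumes "arrangement A" and "H \<in> A" "H' \<in> A" and "H \<subseteq> H'"
  shows "H = H'"
proof -
  obtain a where a: "H = kernel_form a" using assms(1,2) unfolding arrangement_def by blast
  obtain b where b: "b \<noteq> 0" "H' = kernel_form b" using assms(1,3) unfolding arrangement_def by blast
  show ?thesis using kernel_form_subset_imp_eq[OF b(1)] assms(4) a b(2) by simp
qed

section \<open>Formality from a splitting basis\<close>

lemma sum_indicator_scale:
  fixes v :: "'b \<Rightarrow> 'a::field ^ 'm"
  assumes "finite A" and "H \<in> A"
  shows "(\<Sum>K\<in>A. (s * indicator {H} K) *s v K) = s *s v H"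
proof -
  have "(\<Sum>K\<in>A. (s * indicator {H} K) *s v K) = (\<Sum>K\<in>A. if K = H then s *s v K else 0)"
    by (rule sum.cong) (auto simp: indicator_def)
  then show ?thesis using assms by simp
qed

lemma locally_generated_split_relation:
  fixes A :: "('a::field ^ 'm) set set"
  assumes A: "finite A" and \<alpha>: "\<forall>H\<in>A. \<alpha> H \<noteq> 0 \<and> H = kernel_form (\<alpha> H)"
    and H: "H \<in> A" "H1 \<in> A" "H2 \<in> A" and ne12: "H1 \<noteq> H2" and sub: "H1 \<inter> H2 \<subseteq> H"
  shows "\<exists>s t. locally_generated A \<alpha>
    (\<lambda>K. indicator {H} K - s * indicator {H1} K - t * indicator {H2} K)"
proof -
  have ker: "kernel_form (\<alpha> K) = K" if "K \<in> A" for K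
    using \<alpha> that by metis
  have ne: "kernel_form (\<alpha> H1) \<noteq> kernel_form (\<alpha> H2)"
    using ker H ne12 by simp
  moreover have "kernel_form (\<alpha> H1) \<inter> kernel_form (\<alpha> H2) \<subseteq> kernel_form (\<alpha> H)"
    using ker H sub by simp
  ultimately obtain s t where st: "\<alpha> H = s *s \<alpha> H1 + t *s \<alpha> H2"
    using kernel_form_Int_subset_imp_combination \<alpha> H by blast
  let ?r = "\<lambda>K. indicator {H} K - s * indicator {H1} K - t * indicator {H2} K"
  have "(\<Sum>K\<in>A. ?r K *s \<alpha> K) = \<alpha> H - s *s \<alpha> H1 - t *s \<alpha> H2"
    using sum_indicator_scale[OF A H(1), of 1 \<alpha>] sum_indicator_scale[OF A H(2), of s \<alpha>]
      sum_indicator_scale[OF A H(3), of t \<alpha>]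
    by (simp add: vec.scale_left_diff_distrib sum_subtractf)
  then have "is_relation A \<alpha> ?r"
    using st H by (auto simp: is_relation_def indicator_def)
  moreover have "H1 \<inter> H2 \<in> codim2_flats A"
    using Inter_in_int_lattice[of "{H1, H2}" A] codim_kernel_form_Int[OF _ _ ne] \<alpha> H ker
    by (simp add: codim2_flats_def)
  ultimately have "locally_generated A \<alpha> ?r"
    using sub H
    by (intro locally_generated_local[OF A]) (auto simp: local_relation_def localization_def indicator_def)
  then show ?thesis by blast
qed

lemma indicator_reduces_to_basis:
  fixes A :: "('a::field ^ 'm) set set" and \<mu> :: "('a ^ 'm) set \<Rightarrow> nat"
  assumes A: "finite A" and \<alpha>: "\<forall>H\<in>A. \<alpha> H \<noteq> 0 \<and> H = kernel_form (\<alpha> H)"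
    and split: "\<forall>H\<in>A - S. \<exists>H1\<in>A. \<exists>H2\<in>A. H1 \<noteq> H2 \<and> H1 \<inter> H2 \<subseteq> H \<and> \<mu> H1 < \<mu> H \<and> \<mu> H2 < \<mu> H"
    and "H \<in> A"
  shows "\<exists>g. (\<forall>K. g K \<noteq> 0 \<longrightarrow> K \<in> S) \<and> locally_generated A \<alpha> (\<lambda>K. indicator {H} K - g K)"
  using \<open>H \<in> A\<close>
proof (induction H rule: measure_induct_rule[of \<mu>])
  case (less H)
  show ?case
  proof (cases "H \<in> S")
    case True
    then show ?thesis
      using locally_generated_zero by (intro exI[of _ "indicator {H}"]) (auto simp: indicator_def)
  next
    case False
    then have "\<exists>H1\<in>A. \<exists>H2\<in>A. H1 \<noteq> H2 \<and> H1 \<inter> H2 \<subseteq> H \<and> \<mu> H1 < \<mu> H \<and> \<mu> H2 < \<mu> H"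
      using split less.prems by simp
    then obtain H1 H2 where H12: "H1 \<in> A" "H2 \<in> A" "H1 \<noteq> H2" "H1 \<inter> H2 \<subseteq> H"
      "\<mu> H1 < \<mu> H" "\<mu> H2 < \<mu> H"
      by blast
    obtain s t where r: "locally_generated A \<alpha>
        (\<lambda>K. indicator {H} K - s * indicator {H1} K - t * indicator {H2} K)"
      using locally_generated_split_relation[OF A \<alpha> less.prems H12(1-4)] by blast
    obtain g1 where g1: "\<forall>K. g1 K \<noteq> 0 \<longrightarrow> K \<in> S"
      "locally_generated A \<alpha> (\<lambda>K. indicator {H1} K - g1 K)"
      using less.IH[OF H12(5,1)] by blast
    obtain g2 where g2: "\<forall>K. g2 K \<noteq> 0 \<longrightarrow> K \<in> S"
      "locally_generated A \<alpha> (\<lambda>K. indicator {H2} K - g2 K)"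
      using less.IH[OF H12(6,2)] by blast
    have "locally_generated A \<alpha> (\<lambda>K.
        (indicator {H} K - s * indicator {H1} K - t * indicator {H2} K) +
        (s * (indicator {H1} K - g1 K) + t * (indicator {H2} K - g2 K)))"
      by (intro locally_generated_add locally_generated_scale r g1(2) g2(2))
    then have "locally_generated A \<alpha> (\<lambda>K. indicator {H} K - (s * g1 K + t * g2 K))"
      by (simp add: algebra_simps)
    moreover have "\<forall>K. s * g1 K + t * g2 K \<noteq> 0 \<longrightarrow> K \<in> S"
      using g1(1) g2(1) by (metis add.right_neutral mult_zero_right)
    ultimately show ?thesis
      by (intro exI[of _ "\<lambda>K. s * g1 K + t * g2 K"]) simp
  qed
qed

lemma relation_vanishes_on_independent:
  fixes A :: "('a::field ^ 'm) set set"
  assumes A: "finite A" and \<alpha>: "\<forall>H\<in>A. \<alpha> H \<noteq> 0 \<and> H = kernel_form (\<alpha> H)"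
    and c: "is_relation A \<alpha> c" and supp: "\<forall>H. c H \<noteq> 0 \<longrightarrow> H \<in> S"
    and indep: "\<forall>H\<in>S. \<not> \<Inter>(S - {H}) \<subseteq> H"
  shows "c H0 = 0"
proof (rule ccontr)
  assume "c H0 \<noteq> 0"
  then have H0: "H0 \<in> A" "H0 \<in> S" using c supp by (auto simp: is_relation_def)
  then obtain y where y: "y \<in> \<Inter>(S - {H0})" "y \<notin> H0" using indep by blast
  have ker: "kernel_form (\<alpha> K) = K" if "K \<in> A" for K
    using \<alpha> that by metis
  have "c K * lform (\<alpha> K) y = 0" if "K \<in> A - {H0}" for K
  proof (cases "c K = 0")
    case False
    then have "y \<in> kernel_form (\<alpha> K)" using that supp y(1) ker by blast
    then show ?thesis by (simp add: kernel_form_def)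
  qed simp
  then have "(\<Sum>K\<in>A - {H0}. c K * lform (\<alpha> K) y) = 0"
    by (intro sum.neutral) blast
  then have "(\<Sum>K\<in>A. c K * lform (\<alpha> K) y) = c H0 * lform (\<alpha> H0) y"
    using sum.remove[OF A H0(1), of "\<lambda>K. c K * lform (\<alpha> K) y"] by simp
  moreover have "(\<Sum>K\<in>A. c K * lform (\<alpha> K) y) = 0"
    using c by (simp add: is_relation_def lform_sum_left[OF A, symmetric])
  moreover have "lform (\<alpha> H0) y \<noteq> 0"
    using y(2) ker[OF H0(1)] by (auto simp: kernel_form_def)
  ultimately show False using \<open>c H0 \<noteq> 0\<close> by simp
qed

(* Only inclusions and meets
   occur, so the notion is invariant under lattice isomorphisms. *)
definition splitting_basis ::
  "('a ^ 'm) set set \<Rightarrow> ('a ^ 'm) set set \<Rightarrow> (('a ^ 'm) set \<Rightarrow> nat) \<Rightarrow> bool" where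
  "splitting_basis A S \<mu> \<longleftrightarrow> S \<subseteq> A \<and> (\<forall>H\<in>S. \<not> \<Inter>(S - {H}) \<subseteq> H) \<and>
     (\<forall>H\<in>A - S. \<exists>H1\<in>A. \<exists>H2\<in>A. H1 \<noteq> H2 \<and> H1 \<inter> H2 \<subseteq> H \<and> \<mu> H1 < \<mu> H \<and> \<mu> H2 < \<mu> H)"

lemma formal_if_splitting_basis:
  fixes A :: "('a::field ^ 'm) set set"
  assumes A: "finite A" and "splitting_basis A S \<mu>"
  shows "formal A"
proof (rule formalI[OF A])
  fix \<alpha> c
  assume \<alpha>: "\<forall>H\<in>A. \<alpha> H \<noteq> 0 \<and> H = kernel_form (\<alpha> H)" and c: "is_relation A \<alpha> c"
  have split: "\<forall>H\<in>A - S. \<exists>H1\<in>A. \<exists>H2\<in>A. H1 \<noteq> H2 \<and> H1 \<inter> H2 \<subseteq> H \<and> \<mu> H1 < \<mu> H \<and> \<mu> H2 < \<mu> H"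
    and indep: "\<forall>H\<in>S. \<not> \<Inter>(S - {H}) \<subseteq> H"
    using assms(2) unfolding splitting_basis_def by blast+
  have "\<forall>H\<in>A. \<exists>g. (\<forall>K. g K \<noteq> 0 \<longrightarrow> K \<in> S) \<and>
      locally_generated A \<alpha> (\<lambda>K. indicator {H} K - g K)"
    using indicator_reduces_to_basis[OF A \<alpha> split] by blast
  then obtain g where g: "\<forall>H\<in>A. (\<forall>K. g H K \<noteq> 0 \<longrightarrow> K \<in> S) \<and>
      locally_generated A \<alpha> (\<lambda>K. indicator {H} K - g H K)"
    by (rule bchoice[THEN exE])
  (* c = h + (c - h), where h is locally generated and c - h is a relation supported on S. *)
  define h where "h = (\<lambda>K. \<Sum>H\<in>A. c H * (indicator {H} K - g H K))"
  have h: "locally_generated A \<alpha> h"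
    unfolding h_def using g by (intro locally_generated_sum[OF A] locally_generated_scale) blast
  have "c K - h K = (\<Sum>H\<in>A. c H * g H K)" for K
  proof -
    have "(\<Sum>H\<in>A. c H * indicator {H} K) = (\<Sum>H\<in>A. if H = K then c H else 0)"
      by (rule sum.cong) (auto simp: indicator_def)
    then have "c K = (\<Sum>H\<in>A. c H * indicator {H} K)"
      using c A by (simp add: is_relation_def)
    then show ?thesis unfolding h_def by (simp add: sum_subtractf right_diff_distrib)
  qed
  then have "\<forall>K. c K - h K \<noteq> 0 \<longrightarrow> K \<in> S"
    using g by (metis (no_types, lifting) sum.not_neutral_contains_not_neutral mult_zero_right)
  then have "c K - h K = 0" for K
    using relation_vanishes_on_independent[OF A \<alpha>
        is_relation_diff[OF c locally_generated_imp_is_relation[OF A h]] _ indep] by blast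
  then have "c = h" by auto
  then show "locally_generated A \<alpha> c" using h by simp
qed

section \<open>Lattice isomorphisms\<close>

locale arrangement_lattice_iso =
  fixes A :: "('a::field ^ 'n) set set" and B :: "('b::field ^ 'm) set set"
    and f :: "('a ^ 'n) set \<Rightarrow> ('b ^ 'm) set"
  assumes arrangement_A: "arrangement A" and arrangement_B: "arrangement B"
    and bij: "bij_betw f (int_lattice A) (int_lattice B)"
    and subset_iff: "\<forall>X\<in>int_lattice A. \<forall>Y\<in>int_lattice A. X \<subseteq> Y \<longleftrightarrow> f X \<subseteq> f Y"
begin

lemma f_in_int_lattice: "X \<in> int_lattice A \<Longrightarrow> f X \<in> int_lattice B"
  by (rule bij_betw_apply[OF bij])

lemma ex_preimage: "Y \<in> int_lattice B \<Longrightarrow> \<exists>X\<in>int_lattice A. f X = Y"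
  using bij_betw_imp_surj_on[OF bij] by (metis imageE)

lemma f_subset_iff: "X \<in> int_lattice A \<Longrightarrow> Y \<in> int_lattice A \<Longrightarrow> f X \<subseteq> f Y \<longleftrightarrow> X \<subseteq> Y"
  using subset_iff by blast

lemma f_eq_iff: "X \<in> int_lattice A \<Longrightarrow> Y \<in> int_lattice A \<Longrightarrow> f X = f Y \<longleftrightarrow> X = Y"
  using inj_onD[OF bij_betw_imp_inj_on[OF bij]] by blast

lemma f_Inter:
  assumes S: "S \<subseteq> A"
  shows "f (\<Inter>S) = \<Inter>(f ` S)"
proof
  have "f (\<Inter>S) \<subseteq> f H" if "H \<in> S" for H
    using f_subset_iff[OF Inter_in_int_lattice[OF S] hyperplane_in_int_lattice] S that by blast
  then show "f (\<Inter>S) \<subseteq> \<Inter>(f ` S)" by blast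
next
  have "f ` S \<subseteq> int_lattice B"
    using S f_in_int_lattice hyperplane_in_int_lattice by blast
  then obtain Z where Z: "Z \<in> int_lattice A" "f Z = \<Inter>(f ` S)"
    using ex_preimage int_lattice_Inter_closed by metis
  have "Z \<subseteq> H" if "H \<in> S" for H
    using f_subset_iff[OF Z(1) hyperplane_in_int_lattice] Z(2) S that by blast
  then have "f Z \<subseteq> f (\<Inter>S)"
    using f_subset_iff[OF Z(1) Inter_in_int_lattice[OF S]] by blast
  then show "\<Inter>(f ` S) \<subseteq> f (\<Inter>S)" using Z(2) by simp
qed

lemma f_UNIV: "f UNIV = UNIV"
  using f_Inter[of "{}"] by simp

lemma f_hyperplane:
  assumes H: "H \<in> A"
  shows "f H \<in> B"
proof -
  have H_lat: "H \<in> int_lattice A" by (rule hyperplane_in_int_lattice[OF H])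
  have "f H \<noteq> UNIV"
    using f_eq_iff[OF H_lat UNIV_in_int_lattice] f_UNIV
      arrangement_hyperplane_neq_UNIV[OF arrangement_A H] by simp
  then obtain K where K: "K \<in> B" "f H \<subseteq> K"
    using int_lattice_subset_hyperplane[OF f_in_int_lattice[OF H_lat]] by blast
  obtain Z where Z: "Z \<in> int_lattice A" "f Z = K"
    using ex_preimage[OF hyperplane_in_int_lattice[OF K(1)]] by blast
  have "H \<subseteq> Z" using f_subset_iff[OF H_lat Z(1)] Z(2) K(2) by simp
  moreover have "Z \<noteq> UNIV"
    using Z(2) f_UNIV arrangement_hyperplane_neq_UNIV[OF arrangement_B K(1)] by auto
  then obtain H' where "H' \<in> A" "Z \<subseteq> H'"
    using int_lattice_subset_hyperplane[OF Z(1)] by blast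
  ultimately have "Z = H"
    using arrangement_hyperplane_subset_eq[OF arrangement_A H \<open>H' \<in> A\<close>] by auto
  then show ?thesis using Z K by simp
qed

lemma image_hyperplanes: "f ` A = B"
proof
  show "f ` A \<subseteq> B" using f_hyperplane by auto
next
  show "B \<subseteq> f ` A"
  proof
    fix K assume K: "K \<in> B"
    obtain Z where Z: "Z \<in> int_lattice A" "f Z = K"
      using ex_preimage[OF hyperplane_in_int_lattice[OF K]] by blast
    have "Z \<noteq> UNIV"
      using Z(2) f_UNIV arrangement_hyperplane_neq_UNIV[OF arrangement_B K] by auto
    then obtain H where H: "H \<in> A" "Z \<subseteq> H"
      using int_lattice_subset_hyperplane[OF Z(1)] by blast
    then have "K \<subseteq> f H"
      using f_subset_iff[OF Z(1) hyperplane_in_int_lattice[OF H(1)]] Z(2) by simp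
    then have "K = f H"
      by (rule arrangement_hyperplane_subset_eq[OF arrangement_B K f_hyperplane[OF H(1)]])
    then show "K \<in> f ` A" using H(1) by simp
  qed
qed

lemma inj_on_hyperplanes: "inj_on f A"
  using f_eq_iff hyperplane_in_int_lattice by (meson inj_onI)

lemma splitting_basis_image:
  assumes "splitting_basis A S \<mu>"
  shows "splitting_basis B (f ` S) (\<mu> \<circ> inv_into A f)"
proof -
  have S: "S \<subseteq> A" and indep: "\<forall>H\<in>S. \<not> \<Inter>(S - {H}) \<subseteq> H"
    and split: "\<forall>H\<in>A - S. \<exists>H1\<in>A. \<exists>H2\<in>A. H1 \<noteq> H2 \<and> H1 \<inter> H2 \<subseteq> H \<and> \<mu> H1 < \<mu> H \<and> \<mu> H2 < \<mu> H"
    using assms unfolding splitting_basis_def by auto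
  let ?\<mu> = "\<mu> \<circ> inv_into A f"
  have \<mu>: "?\<mu> (f H) = \<mu> H" if "H \<in> A" for H
    using inv_into_f_f[OF inj_on_hyperplanes that] by simp
  have "f ` S \<subseteq> B" using S image_hyperplanes by auto
  moreover have "\<not> \<Inter>(f ` S - {f H}) \<subseteq> f H" if H: "H \<in> S" for H
  proof
    have "f ` S - {f H} = f ` (S - {H})"
      using inj_on_image_set_diff[OF inj_on_hyperplanes, of S "{H}"] S H by auto
    then have "\<Inter>(f ` S - {f H}) = f (\<Inter>(S - {H}))"
      using f_Inter[of "S - {H}"] S by auto
    moreover assume "\<Inter>(f ` S - {f H}) \<subseteq> f H"
    ultimately have "f (\<Inter>(S - {H})) \<subseteq> f H" by simp
    then have "\<Inter>(S - {H}) \<subseteq> H"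
      using f_subset_iff[OF Inter_in_int_lattice hyperplane_in_int_lattice, of "S - {H}" H] S H
      by auto
    then show False using indep H by auto
  qed
  moreover have "\<exists>K1\<in>B. \<exists>K2\<in>B. K1 \<noteq> K2 \<and> K1 \<inter> K2 \<subseteq> K \<and> ?\<mu> K1 < ?\<mu> K \<and> ?\<mu> K2 < ?\<mu> K"
    if K: "K \<in> B - f ` S" for K
  proof -
    obtain H where H: "H \<in> A" "H \<notin> S" "K = f H"
      using K image_hyperplanes by auto
    have "\<exists>H1\<in>A. \<exists>H2\<in>A. H1 \<noteq> H2 \<and> H1 \<inter> H2 \<subseteq> H \<and> \<mu> H1 < \<mu> H \<and> \<mu> H2 < \<mu> H"
      using split H(1,2) by simp
    then obtain H1 H2 where H12: "H1 \<in> A" "H2 \<in> A" "H1 \<noteq> H2" "H1 \<inter> H2 \<subseteq> H"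
      "\<mu> H1 < \<mu> H" "\<mu> H2 < \<mu> H"
      by blast
    have "f H1 \<noteq> f H2" using inj_onD[OF inj_on_hyperplanes _ H12(1,2)] H12(3) by auto
    moreover have "f H1 \<inter> f H2 \<subseteq> f H"
    proof -
      have "f (\<Inter>{H1, H2}) \<subseteq> f H"
        using f_subset_iff[OF Inter_in_int_lattice hyperplane_in_int_lattice, of "{H1, H2}" H]
          H(1) H12(1,2,4) by simp
      then show ?thesis using f_Inter[of "{H1, H2}"] H12(1,2) by simp
    qed
    moreover have "f H1 \<in> B" "f H2 \<in> B" using f_hyperplane H12(1,2) by auto
    moreover have "?\<mu> (f H1) < ?\<mu> K" "?\<mu> (f H2) < ?\<mu> K"
      using \<mu> H(1,3) H12(1,2,5,6) by auto
    ultimately show ?thesis using H(3) by blast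
  qed
  ultimately show ?thesis unfolding splitting_basis_def by auto
qed

end

section \<open>Splitting connected induced subgraphs\<close>

definition induced_rel :: "('n \<Rightarrow> 'n \<Rightarrow> bool) \<Rightarrow> 'n set \<Rightarrow> ('n \<times> 'n) set" where
  "induced_rel E I = {(x, y). x \<in> I \<and> y \<in> I \<and> E x y}"

lemma induced_connected_iff:
  "induced_connected E I \<longleftrightarrow> I \<noteq> {} \<and> (\<forall>u\<in>I. \<forall>v\<in>I. (u, v) \<in> (induced_rel E I)\<^sup>*)"
  unfolding induced_connected_def induced_rel_def by simp

lemma sym_induced_rel: "symp E \<Longrightarrow> sym (induced_rel E I)"
  unfolding induced_rel_def by (auto simp: sym_def dest: sympD)

lemma rtrancl_induced_rel_mem:
  "(a, b) \<in> (induced_rel E I)\<^sup>* \<Longrightarrow> a \<in> I \<Longrightarrow> b \<in> I"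
  by (induction rule: rtrancl_induct) (auto simp: induced_rel_def)

lemma rtrancl_induced_rel_closed:
  assumes "(a, b) \<in> (induced_rel E I)\<^sup>*" and "a \<in> C" and "C \<subseteq> I"
    and closed: "\<And>x y. x \<in> C \<Longrightarrow> (x, y) \<in> induced_rel E I \<Longrightarrow> y \<in> C"
  shows "(a, b) \<in> (induced_rel E C)\<^sup>*"
proof -
  from assms(1) have "(a, b) \<in> (induced_rel E C)\<^sup>* \<and> b \<in> C"
  proof (induction rule: rtrancl_induct)
    case base
    then show ?case using assms(2) by simp
  next
    case (step y z)
    then have "z \<in> C" using closed by blast
    then have "(y, z) \<in> induced_rel E C" using step by (auto simp: induced_rel_def)
    then show ?case using step.IH \<open>z \<in> C\<close> by (meson rtrancl.rtrancl_into_rtrancl)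
  qed
  then show ?thesis ..
qed

lemma induced_connectedI:
  assumes "symp E" and "w \<in> I" and "\<And>x. x \<in> I \<Longrightarrow> (w, x) \<in> (induced_rel E I)\<^sup>*"
  shows "induced_connected E I"
  unfolding induced_connected_iff
proof (intro conjI ballI)
  show "I \<noteq> {}" using assms(2) by blast
next
  fix u v assume "u \<in> I" "v \<in> I"
  then have "(u, w) \<in> (induced_rel E I)\<^sup>*" "(w, v) \<in> (induced_rel E I)\<^sup>*"
    using assms(3) symD[OF sym_rtrancl[OF sym_induced_rel[OF assms(1)]]] by blast+
  then show "(u, v) \<in> (induced_rel E I)\<^sup>*" by (rule rtrancl_trans)
qed

(* J is the component of w in I - {u}.  A path inside I from a vertex of K = I - J to u
   cannot enter J before reaching u, so K is connected as well. *)
lemma induced_connected_split: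
  assumes sym: "symp E" and I: "induced_connected E I" and not_singleton: "\<forall>v. I \<noteq> {v}"
  shows "\<exists>J K. induced_connected E J \<and> induced_connected E K \<and> J \<inter> K = {} \<and> J \<union> K = I"
proof -
  obtain u w where u: "u \<in> I" and w: "w \<in> I" "w \<noteq> u"
    using I not_singleton unfolding induced_connected_def by blast
  define J where "J = {x. (w, x) \<in> (induced_rel E (I - {u}))\<^sup>*}"
  define K where "K = I - J"
  have J_sub: "J \<subseteq> I - {u}"
    using rtrancl_induced_rel_mem w unfolding J_def by fastforce
  have J_closed: "y \<in> J" if "x \<in> J" "(x, y) \<in> induced_rel E (I - {u})" for x y
    using that unfolding J_def by (simp add: rtrancl.rtrancl_into_rtrancl)
  have "induced_connected E J"
  proof (rule induced_connectedI[OF sym])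
    show "w \<in> J" unfolding J_def by simp
    show "(w, x) \<in> (induced_rel E J)\<^sup>*" if "x \<in> J" for x
      using that \<open>w \<in> J\<close> J_sub J_closed
      by (intro rtrancl_induced_rel_closed[of w x E "I - {u}" J]) (auto simp: J_def)
  qed
  moreover have "induced_connected E K"
  proof (rule induced_connectedI[OF sym])
    show "u \<in> K" using u J_sub unfolding K_def by blast
    have "x \<in> K \<longrightarrow> (x, u) \<in> (induced_rel E K)\<^sup>*" if "(x, u) \<in> (induced_rel E I)\<^sup>*" for x
      using that
    proof (induction rule: converse_rtrancl_induct)
      case base
      show ?case by simp
    next
      case (step x y)
      show ?case
      proof
        assume x: "x \<in> K"
        have xy: "x \<in> I" "y \<in> I" "E x y" using step(1) by (auto simp: induced_rel_def)
        show "(x, u) \<in> (induced_rel E K)\<^sup>*"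
        proof (cases "x = u")
          case False
          have "y \<in> K"
          proof (rule ccontr)
            assume "y \<notin> K"
            then have "y \<in> J" using xy unfolding K_def by blast
            moreover have "(y, x) \<in> induced_rel E (I - {u})"
              using xy False \<open>y \<in> J\<close> J_sub sympD[OF sym] by (auto simp: induced_rel_def)
            ultimately show False using J_closed x unfolding K_def by blast
          qed
          then have "(x, y) \<in> induced_rel E K" using x xy by (auto simp: induced_rel_def)
          then show ?thesis using step.IH \<open>y \<in> K\<close> by (meson converse_rtrancl_into_rtrancl)
        qed simp
      qed
    qed
    then show "(u, x) \<in> (induced_rel E K)\<^sup>*" if "x \<in> K" for x
      using that I u symD[OF sym_rtrancl[OF sym_induced_rel[OF sym]]]
      unfolding induced_connected_iff K_def by blast
  qed
  moreover have "J \<inter> K = {}" "J \<union> K = I" using J_sub unfolding K_def by auto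
  ultimately show ?thesis by blast
qed

section \<open>The arrangement of a graph\<close>

lemma axis_in_H_I_iff: "(axis v 1 :: 'a::field ^ 'n::finite) \<in> H_I I \<longleftrightarrow> v \<notin> I"
proof -
  have "(\<Sum>i\<in>I. (axis v 1 :: 'a ^ 'n) $ i) = (\<Sum>i\<in>I. if v = i then 1 else 0)"
    by (rule sum.cong) (auto simp: axis_def)
  then show ?thesis unfolding H_I_def by simp
qed

lemma H_I_eq_iff: "(H_I I :: ('a::field ^ 'n::finite) set) = H_I J \<longleftrightarrow> I = J"
  using axis_in_H_I_iff by blast

lemma H_I_eq_kernel_form:
  "(H_I I :: ('a::field ^ 'n::finite) set) = kernel_form (\<chi> i. if i \<in> I then 1 else 0)"
proof -
  have "lform (\<chi> i. if i \<in> I then 1 else 0) x = (\<Sum>i\<in>UNIV. if i \<in> I then x $ i else 0)"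
    for x :: "'a ^ 'n"
    unfolding lform_def by (rule sum.cong) auto
  then show ?thesis
    unfolding H_I_def kernel_form_def by (simp add: sum.inter_restrict[symmetric])
qed

lemma H_I_Int_subset:
  assumes "J \<inter> K = {}"
  shows "H_I J \<inter> H_I K \<subseteq> (H_I (J \<union> K) :: ('a::field ^ 'n::finite) set)"
  using assms by (auto simp: H_I_def sum.union_disjoint)

lemma arrangement_graphic_arr: "arrangement (graphic_arr E :: ('a::field ^ 'n::finite) set set)"
  unfolding arrangement_def
proof
  have "(graphic_arr E :: ('a ^ 'n) set set) \<subseteq> range H_I" unfolding graphic_arr_def by blast
  then show "finite (graphic_arr E :: ('a ^ 'n) set set)" by (rule finite_subset) simp
next
  have "(\<chi> i. if i \<in> I then 1 else 0) \<noteq> (0 :: 'a ^ 'n)" if "i \<in> I" for i I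
    using that by (auto simp: vec_eq_iff)
  then show "\<forall>H\<in>(graphic_arr E :: ('a ^ 'n) set set). \<exists>a. a \<noteq> 0 \<and> H = kernel_form a"
    unfolding graphic_arr_def using H_I_eq_kernel_form by blast
qed

lemma H_I_in_graphic_arr: "induced_connected E I \<Longrightarrow> H_I I \<in> graphic_arr E"
  unfolding graphic_arr_def induced_connected_def by blast

lemma induced_connected_singleton: "induced_connected E {v}"
  unfolding induced_connected_def by simp

(* The rank of H_I is |I|, read off from H_I as the set of coordinate axes it misses. *)
lemma splitting_basis_graphic_arr:
  assumes sym: "symp E"
  shows "splitting_basis (graphic_arr E :: ('a::field ^ 'n::finite) set set)
    (range (\<lambda>v. H_I {v})) (\<lambda>H. card {v. (axis v 1 :: 'a ^ 'n) \<notin> H})"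
proof -
  let ?A = "graphic_arr E :: ('a ^ 'n) set set"
  let ?S = "range (\<lambda>v. H_I {v}) :: ('a ^ 'n) set set"
  let ?\<mu> = "\<lambda>H. card {v. (axis v 1 :: 'a ^ 'n) \<notin> H}"
  have "?S \<subseteq> ?A" using H_I_in_graphic_arr[OF induced_connected_singleton] by blast
  moreover have "\<not> \<Inter>(?S - {H}) \<subseteq> H" if "H \<in> ?S" for H
  proof -
    obtain v where v: "H = H_I {v}" using \<open>H \<in> ?S\<close> by blast
    have "(axis v 1 :: 'a ^ 'n) \<in> \<Inter>(?S - {H})"
      using v axis_in_H_I_iff by auto
    moreover have "(axis v 1 :: 'a ^ 'n) \<notin> H" unfolding v by (simp add: axis_in_H_I_iff)
    ultimately show ?thesis by blast
  qed
  moreover have "\<exists>H1\<in>?A. \<exists>H2\<in>?A. H1 \<noteq> H2 \<and> H1 \<inter> H2 \<subseteq> H \<and> ?\<mu> H1 < ?\<mu> H \<and> ?\<mu> H2 < ?\<mu> H"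
    if "H \<in> ?A - ?S" for H
  proof -
    have \<mu>: "?\<mu> (H_I I) = card I" for I
      by (simp add: axis_in_H_I_iff)
    obtain I where I: "H = H_I I" "induced_connected E I" "\<forall>v. I \<noteq> {v}"
      using \<open>H \<in> ?A - ?S\<close> unfolding graphic_arr_def by blast
    then obtain J K where JK: "induced_connected E J" "induced_connected E K" "J \<inter> K = {}" "J \<union> K = I"
      using induced_connected_split[OF sym] by blast
    then have "J \<noteq> {}" "K \<noteq> {}" unfolding induced_connected_def by auto
    then have "J \<noteq> K" "card J < card I" "card K < card I"
      using JK(3,4) by (auto intro!: psubset_card_mono)
    then have "H_I J \<noteq> H_I K" "?\<mu> (H_I J) < ?\<mu> H" "?\<mu> (H_I K) < ?\<mu> H"
      using I(1) by (simp_all add: H_I_eq_iff \<mu>)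
    moreover have "H_I J \<inter> H_I K \<subseteq> H" using H_I_Int_subset[OF JK(3)] JK(4) I(1) by simp
    moreover have "H_I J \<in> ?A" "H_I K \<in> ?A" using H_I_in_graphic_arr JK(1,2) by auto
    ultimately show ?thesis by blast
  qed
  ultimately show ?thesis unfolding splitting_basis_def by auto
qed

theorem mainTheorem12:
  fixes E :: "'n::finite \<Rightarrow> 'n \<Rightarrow> bool"
  assumes "simple_graph E"
    and "graph_connected E"
  shows "formal (graphic_arr E :: ('a::field ^ 'n) set set) \<and>
    (\<forall>B :: ('a ^ 'm::finite) set set.
       arrangement B \<and> lattice_iso (graphic_arr E :: ('a ^ 'n) set set) B \<longrightarrow> formal B)"
proof -
  let ?A = "graphic_arr E :: ('a ^ 'n) set set"
  have "symp E" using assms(1) unfolding simple_graph_def by (blast intro: sympI)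
  then have basis: "splitting_basis ?A (range (\<lambda>v. H_I {v})) (\<lambda>H. card {v. (axis v 1 :: 'a ^ 'n) \<notin> H})"
    by (rule splitting_basis_graphic_arr)
  have "formal ?A"
    using formal_if_splitting_basis[OF _ basis] arrangement_graphic_arr
    unfolding arrangement_def by blast
  moreover have "formal B" if B: "arrangement B" and iso: "lattice_iso ?A B" for B :: "('a ^ 'm) set set"
  proof -
    obtain f where "bij_betw f (int_lattice ?A) (int_lattice B)"
      and "\<forall>X\<in>int_lattice ?A. \<forall>Y\<in>int_lattice ?A. X \<subseteq> Y \<longleftrightarrow> f X \<subseteq> f Y"
      using iso unfolding lattice_iso_def by blast
    then interpret arrangement_lattice_iso ?A B f
      using arrangement_graphic_arr B by unfold_locales
    show ?thesis
      using formal_if_splitting_basis[OF _ splitting_basis_image[OF basis]] B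
      unfolding arrangement_def by blast
  qed
  ultimately show ?thesis by blast
qed

end
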